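(* Let $k\ge 1$, $\epsilon\in(0,1]$, and let $F=F_1\times\cdots\times F_n$ be a $k$-unit auction instance with quasi-regular distributions forming an $\epsilon$-large market, normalized so that $\mathrm{AP}(F)=1$. Let $\gamma$ be a constant such that $\mathrm{OPT}(G)\le\gamma\log k\cdot\mathrm{AP}(G)$ for every $k$-unit instance $G$ with quasi-regular distributions. Then for every price $p\ge\frac1k$ and every agent $i$, $F_i(p)\ge 1-\epsilon\cdot\gamma k\log k$.
   Context: A seller has $k$ identical units and $n$ unit-demand agents with independent private values $v_i\sim F_i$ ($F_i$ also denotes the CDF), utility $v_ix_i-p_i$. $\mathrm{OPT}(F)$ is the maximum expected revenue over Bayesian incentive compatible, interim individually rational mechanisms allocating at most $k$ units. An anonymous pricing mechanism with price $p$ offers $p$ to agents one at a time in an arbitrary order until units run out (agents with $v_i\ge p$ accept); $\mathrm{AP}(F)$ is the maximum over $p$ of its expected revenue. With virtual value $\phi_i(v)=v-\frac{1-F_i(v)}{f_i(v)}$, $F_i$ is quasi-regular if $\mathbb{E}_{\hat v\sim F_i}[\phi_i(\hat v)\mid\hat v\le v]$ is weakly increasing in $v$. With $v_i(q)=\inf\{v:F_i(v)\ge1-q\}$ and $R_i(q)=q\,v_i(q)$, the monopoly revenue of agent $i$ is $R_i(q_i^* )=\max_q R_i(q)$; $F$ is an $\epsilon$-large market if $R_i(q_i^* )\le\epsilon\cdot\mathrm{OPT}(F)$ for all $i$. *)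

theory Defs
  imports "HOL-Probability.Probability"
begin

definition cdf :: "real measure \<Rightarrow> real \<Rightarrow> real" where
  "cdf M v = measure M {..v}"

definition auction_instance :: "nat \<Rightarrow> (nat \<Rightarrow> real measure) \<Rightarrow> bool" where
  "auction_instance n M \<longleftrightarrow>
     (\<forall>i<n. prob_space (M i) \<and> sets (M i) = sets borel \<and> (AE v in M i. 0 \<le> v))"

abbreviation profile :: "nat \<Rightarrow> (nat \<Rightarrow> real measure) \<Rightarrow> (nat \<Rightarrow> real) measure" where
  "profile n M \<equiv> PiM {..<n} M"

definition virtual_value :: "real measure \<Rightarrow> (real \<Rightarrow> real) \<Rightarrow> real \<Rightarrow> real" where
  "virtual_value M f v = v - (1 - cdf M v) / f v"

definition cond_virtual :: "real measure \<Rightarrow> (real \<Rightarrow> real) \<Rightarrow> real \<Rightarrow> real" where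
  "cond_virtual M f v = (LINT t:{..v}|M. virtual_value M f t) / cdf M v"

definition quasi_regular :: "real measure \<Rightarrow> bool" where
  "quasi_regular M \<longleftrightarrow>
     (\<exists>f. f \<in> borel_measurable borel \<and> (\<forall>x. 0 \<le> f x) \<and>
          M = density lborel (\<lambda>x. ennreal (f x)) \<and>
          (\<forall>v. 0 < cdf M v \<longrightarrow> set_integrable M {..v} (virtual_value M f)) \<and>
          (\<forall>v w. 0 < cdf M v \<and> v \<le> w \<longrightarrow> cond_virtual M f v \<le> cond_virtual M f w))"

(* Direct revelation mechanisms: x i v = (expected) allocation probability of agent i,
   p i v = (expected) payment of agent i, at reported profile v. *)
definition feasible :: "nat \<Rightarrow> nat \<Rightarrow> (nat \<Rightarrow> (nat \<Rightarrow> real) \<Rightarrow> real) \<Rightarrow> bool" where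
  "feasible k n x \<longleftrightarrow> (\<forall>v. (\<forall>i<n. 0 \<le> x i v \<and> x i v \<le> 1) \<and> (\<Sum>i<n. x i v) \<le> real k)"

definition well_defined_mech :: "nat \<Rightarrow> (nat \<Rightarrow> real measure) \<Rightarrow>
    (nat \<Rightarrow> (nat \<Rightarrow> real) \<Rightarrow> real) \<Rightarrow> (nat \<Rightarrow> (nat \<Rightarrow> real) \<Rightarrow> real) \<Rightarrow> bool" where
  "well_defined_mech n M x p \<longleftrightarrow>
     (\<forall>i<n. x i \<in> borel_measurable (PiM {..<n} (\<lambda>_. borel)) \<and>
            p i \<in> borel_measurable (PiM {..<n} (\<lambda>_. borel)) \<and>
            integrable (profile n M) (p i) \<and>
            (\<forall>w. integrable (profile n M) (\<lambda>v. p i (v(i := w)))))"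

definition interim_util :: "nat \<Rightarrow> (nat \<Rightarrow> real measure) \<Rightarrow>
    (nat \<Rightarrow> (nat \<Rightarrow> real) \<Rightarrow> real) \<Rightarrow> (nat \<Rightarrow> (nat \<Rightarrow> real) \<Rightarrow> real) \<Rightarrow>
    nat \<Rightarrow> real \<Rightarrow> real \<Rightarrow> real" where
  "interim_util n M x p i w w' =
     (\<integral>v. w * x i (v(i := w')) - p i (v(i := w')) \<partial>profile n M)"

definition BIC_IIR :: "nat \<Rightarrow> (nat \<Rightarrow> real measure) \<Rightarrow>
    (nat \<Rightarrow> (nat \<Rightarrow> real) \<Rightarrow> real) \<Rightarrow> (nat \<Rightarrow> (nat \<Rightarrow> real) \<Rightarrow> real) \<Rightarrow> bool" where
  "BIC_IIR n M x p \<longleftrightarrow>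
     (\<forall>i<n. AE w in M i. 0 \<le> interim_util n M x p i w w \<and>
                         (\<forall>w'. interim_util n M x p i w w' \<le> interim_util n M x p i w w))"

definition revenue :: "nat \<Rightarrow> (nat \<Rightarrow> real measure) \<Rightarrow> (nat \<Rightarrow> (nat \<Rightarrow> real) \<Rightarrow> real) \<Rightarrow> real" where
  "revenue n M p = (\<integral>v. (\<Sum>i<n. p i v) \<partial>profile n M)"

definition OPT :: "nat \<Rightarrow> nat \<Rightarrow> (nat \<Rightarrow> real measure) \<Rightarrow> ereal" where
  "OPT k n M = (SUP xp \<in> {(x, p). feasible k n x \<and> well_defined_mech n M x p \<and> BIC_IIR n M x p}.
                  ereal (revenue n M (snd xp)))"

(* Revenue of anonymous pricing at price p: the price is offered sequentially until units
   run out; every agent with value >= p accepts, so exactly min k #{i. v_i >= p} units are sold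
   (independently of the order). *)
definition ap_revenue :: "nat \<Rightarrow> nat \<Rightarrow> (nat \<Rightarrow> real measure) \<Rightarrow> real \<Rightarrow> real" where
  "ap_revenue k n M q = q * (\<integral>v. real (min k (card {i\<in>{..<n}. q \<le> v i})) \<partial>profile n M)"

definition AP :: "nat \<Rightarrow> nat \<Rightarrow> (nat \<Rightarrow> real measure) \<Rightarrow> ereal" where
  "AP k n M = (SUP q. ereal (ap_revenue k n M q))"

definition quantile_value :: "real measure \<Rightarrow> real \<Rightarrow> real" where
  "quantile_value M q = Inf {v. cdf M v \<ge> 1 - q}"

definition rev_curve :: "real measure \<Rightarrow> real \<Rightarrow> real" where
  "rev_curve M q = q * quantile_value M q"

(* epsilon-large market: monopoly revenue max_q R_i(q) <= eps * OPT(F) for all i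
   (stated as a bound for every interior quantile, i.e. on the supremum) *)
definition large_market :: "real \<Rightarrow> nat \<Rightarrow> nat \<Rightarrow> (nat \<Rightarrow> real measure) \<Rightarrow> bool" where
  "large_market \<epsilon> k n M \<longleftrightarrow>
     (\<forall>i<n. \<forall>q\<in>{0<..<1}. ereal (rev_curve (M i) q) \<le> ereal \<epsilon> * OPT k n M)"

end

theory Submission
  imports Defs
begin

text \<open>With \<open>AP(F) = 1\<close> the assumed approximation bound caps \<open>OPT(F)\<close> by \<open>\<gamma> log k\<close>, so in an
  \<open>\<epsilon>\<close>-large market every revenue curve \<open>R\<^sub>i\<close> stays below \<open>\<epsilon> \<gamma> log k\<close>. Posting a price \<open>p\<close> to
  agent \<open>i\<close> alone sells with probability \<open>1 - F\<^sub>i(p)\<close>, which is a point on that revenue curve,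
  so \<open>p (1 - F\<^sub>i(p)) \<le> \<epsilon> \<gamma> log k\<close>; for \<open>p \<ge> 1/k\<close> this is the claim.\<close>

lemma OPT_nonneg: "0 \<le> OPT k n M"
proof -
  let ?zero = "\<lambda>(i::nat) (v::nat \<Rightarrow> real). 0::real"
  have "(?zero, ?zero) \<in> {(x, p). feasible k n x \<and> well_defined_mech n M x p \<and> BIC_IIR n M x p}"
    by (simp add: feasible_def well_defined_mech_def BIC_IIR_def interim_util_def)
  then have "ereal (revenue n M ?zero) \<le> OPT k n M"
    unfolding OPT_def by (metis (no_types, lifting) SUP_upper snd_conv)
  then show ?thesis
    by (simp add: revenue_def zero_ereal_def)
qed

lemma real_distribution_if_auction_instance:
  assumes "auction_instance n M" "i < n"
  shows "real_distribution (M i)"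
  using assms by (simp add: auction_instance_def real_distribution_def real_distribution_axioms_def)

lemma large_market_rev_curve_le:
  assumes "large_market \<epsilon> k n M" "OPT k n M \<le> ereal C" "0 \<le> \<epsilon>" "i < n" "q \<in> {0<..<1}"
  shows "rev_curve (M i) q \<le> \<epsilon> * C"
proof -
  have "ereal (rev_curve (M i) q) \<le> ereal \<epsilon> * OPT k n M"
    using assms(1,4,5) by (simp add: large_market_def)
  also have "\<dots> \<le> ereal \<epsilon> * ereal C"
    using assms(2,3) by (intro ereal_mult_left_mono) auto
  finally show ?thesis
    by simp
qed

lemma (in real_distribution) le_quantile_value_if_cdf_less:
  assumes "0 < q" "Defs.cdf M p < 1 - q"
  shows "p \<le> quantile_value M q"
  unfolding quantile_value_def
proof (rule cInf_greatest)
  have "eventually (\<lambda>v. 1 - q < measure M {..v}) at_top"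
    using order_tendstoD(1)[OF cdf_lim_at_top_prob] assms(1)
    by (simp add: Distribution_Functions.cdf_def)
  then obtain v where "1 - q < measure M {..v}"
    by (auto simp: eventually_at_top_linorder)
  then show "{v. 1 - q \<le> Defs.cdf M v} \<noteq> {}"
    by (auto simp: Defs.cdf_def intro!: exI[of _ v])
next
  fix v assume "v \<in> {v. 1 - q \<le> Defs.cdf M v}"
  then have "Defs.cdf M p < Defs.cdf M v"
    using assms(2) by simp
  show "p \<le> v"
  proof (rule ccontr)
    assume "\<not> p \<le> v"
    then have "measure M {..v} \<le> measure M {..p}"
      by (intro finite_measure_mono) auto
    with \<open>Defs.cdf M p < Defs.cdf M v\<close> show False
      by (simp add: Defs.cdf_def)
  qed
qed

text \<open>Since \<open>F\<close> may jump at \<open>p\<close>, the quantile \<open>1 - F(p)\<close> itself need not have value \<open>\<ge> p\<close>;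
  the quantiles just below it do, and the bound follows in the limit.\<close>

lemma (in real_distribution) price_mult_tail_le:
  assumes rev_le: "\<forall>q\<in>{0<..<1}. rev_curve M q \<le> R" and "0 < p" "0 \<le> R"
  shows "p * (1 - Defs.cdf M p) \<le> R"
proof (cases "Defs.cdf M p < 1")
  case True
  have "1 - Defs.cdf M p \<le> R / p"
  proof (rule dense_le_bounded[of 0])
    show "0 < 1 - Defs.cdf M p"
      using True by simp
  next
    fix w assume w: "0 < w" "w < 1 - Defs.cdf M p"
    have "0 \<le> Defs.cdf M p"
      by (simp add: Defs.cdf_def)
    with w have "w < 1"
      by simp
    have "w * p \<le> w * quantile_value M w"
      using le_quantile_value_if_cdf_less[of w p] w by simp
    also have "\<dots> \<le> R"
      using rev_le w \<open>w < 1\<close> by (simp add: rev_curve_def)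
    finally show "w \<le> R / p"
      using \<open>0 < p\<close> by (simp add: field_simps)
  qed
  then show ?thesis
    using \<open>0 < p\<close> by (simp add: field_simps)
next
  case False
  have "Defs.cdf M p \<le> 1"
    unfolding Defs.cdf_def by simp
  with False show ?thesis
    using \<open>0 \<le> R\<close> by simp
qed

theorem corollary3p4:
  fixes k n :: nat and \<epsilon> \<gamma> :: real and M :: "nat \<Rightarrow> real measure"
  assumes "k \<ge> 1"
    and "0 < \<epsilon>" and "\<epsilon> \<le> 1"
    and "auction_instance n M"
    and "\<forall>i<n. quasi_regular (M i)"
    and "large_market \<epsilon> k n M"
    and "AP k n M = 1"
    and "\<forall>n' G. auction_instance n' G \<and> (\<forall>i<n'. quasi_regular (G i)) \<longrightarrow>
            OPT k n' G \<le> ereal (\<gamma> * ln (real k)) * AP k n' G"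
  shows "\<forall>p\<ge>1 / real k. \<forall>i<n. cdf (M i) p \<ge> 1 - \<epsilon> * \<gamma> * real k * ln (real k)"
proof (intro allI impI)
  fix p i assume p: "p \<ge> 1 / real k" and "i < n"
  define R where "R = \<epsilon> * (\<gamma> * ln (real k))"
  have opt: "OPT k n M \<le> ereal (\<gamma> * ln (real k))"
    using assms(4,5,7,8) by (metis mult.comm_neutral one_ereal_def)
  then have "0 \<le> \<gamma> * ln (real k)"
    using OPT_nonneg[of k n M] by (metis ereal_less_eq(5) order_trans)
  then have "0 \<le> R"
    using \<open>0 < \<epsilon>\<close> by (simp add: R_def)
  have "1 \<le> p * real k"
    using p \<open>k \<ge> 1\<close> by (simp add: field_simps)
  have "0 < 1 / real k"
    using \<open>k \<ge> 1\<close> by simp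
  with p have "0 < p"
    by linarith
  interpret real_distribution "M i"
    using real_distribution_if_auction_instance[OF assms(4) \<open>i < n\<close>] .
  have "p * (1 - cdf (M i) p) \<le> R"
    using large_market_rev_curve_le[OF assms(6) opt _ \<open>i < n\<close>] \<open>0 < \<epsilon>\<close> \<open>0 < p\<close> \<open>0 \<le> R\<close>
    by (intro price_mult_tail_le) (simp_all add: R_def)
  also have "\<dots> \<le> p * (R * real k)"
    using \<open>1 \<le> p * real k\<close> \<open>0 \<le> R\<close> mult_left_mono[of 1 "p * real k" R] by (simp add: ac_simps)
  finally have "1 - cdf (M i) p \<le> R * real k"
    using \<open>0 < p\<close> by simp
  then show "cdf (M i) p \<ge> 1 - \<epsilon> * \<gamma> * real k * ln (real k)"
    by (simp add: R_def ac_simps)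
qed

end
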